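(* Let $n \ge 1$, let $\beta_w, \beta_n \in (0,1)$ with $\beta_n < \beta_w$, and let $w_1, \dots, w_n \in \mathbb{R}_{\ge 0}$ with $W := \sum_{i=1}^n w_i \neq 0$. Then there exist integers $t_1, \dots, t_n \in \mathbb{Z}_{\ge 0}$, with $T := \sum_{i=1}^n t_i$, such that for every $S \subseteq [n]$ with $w(S) > \beta_w W$ we have $t(S) > \beta_n T$, and $$T \le \left\lceil \frac{\beta_w(1-\beta_w)}{\beta_w - \beta_n}\, n \right\rceil.$$
   Context: $[n] := \{1,\dots,n\}$. For $S \subseteq [n]$, $w(S) := \sum_{i\in S} w_i$ and $t(S) := \sum_{i \in S} t_i$. (This is the upper bound for the Weight Qualification problem, which asks to minimize $T$ subject to the displayed constraint.) *)

theory Defs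
  imports Complex_Main
begin

end

theory Submission
  imports Defs
begin

text \<open>Scale the weights by a common factor \<open>\<alpha>\<close> and round each \<open>\<alpha> w\<^sub>i\<close> up exactly when its
fractional part exceeds \<open>\<beta>\<^sub>w\<close> (a divisor method of apportionment), choosing \<open>\<alpha>\<close> so that the
tickets add up to \<open>T = \<lceil>\<beta>\<^sub>w (1 - \<beta>\<^sub>w) n / (\<beta>\<^sub>w - \<beta>\<^sub>n)\<rceil>\<close>. Every ticket count deviates from
\<open>\<alpha> w\<^sub>i\<close> by at least \<open>-\<beta>\<^sub>w\<close> and at most \<open>1 - \<beta>\<^sub>w\<close>. For a coalition \<open>S\<close> of weight above
\<open>\<beta>\<^sub>w W\<close>, the complement \<open>A\<close> has weight \<open>a < (1 - \<beta>\<^sub>w) W\<close>, and eliminating \<open>\<alpha>\<close> from the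
two deviation bounds gives \<open>W t(A) \<le> T a + (W - a) (1 - \<beta>\<^sub>w) n\<close>. The right-hand side is
increasing in \<open>a\<close> and at \<open>a = (1 - \<beta>\<^sub>w) W\<close> it is at most \<open>(1 - \<beta>\<^sub>n) T W\<close> by the choice of
\<open>T\<close>; hence \<open>t(A) < (1 - \<beta>\<^sub>n) T\<close>, i.e. \<open>t(S) > \<beta>\<^sub>n T\<close>.\<close>

text \<open>\<open>k\<close> is \<open>x\<close> rounded up if the fractional part of \<open>x\<close> exceeds \<open>b\<close>, down if it is below
\<open>b\<close>, and either way at a tie.\<close>

definition shifted_rounding :: "real \<Rightarrow> real \<Rightarrow> int \<Rightarrow> bool" where
  "shifted_rounding b x k \<longleftrightarrow> x - b \<le> of_int k \<and> of_int k \<le> x - b + 1"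

lemma shifted_rounding_nonneg:
  assumes "shifted_rounding b x k" "0 \<le> x" "b < 1"
  shows "0 \<le> k"
proof -
  have "(-1 :: real) < of_int k"
    using assms by (auto simp: shifted_rounding_def)
  then show ?thesis by simp
qed

lemma shifted_rounding_increment:
  fixes w :: "'a \<Rightarrow> real" and t :: "'a \<Rightarrow> int"
  assumes "finite I" and nonneg: "\<forall>i\<in>I. 0 \<le> w i" and "\<exists>i\<in>I. 0 < w i"
    and "0 \<le> \<alpha>" and rounding: "\<forall>i\<in>I. shifted_rounding b (\<alpha> * w i) (t i)"
  obtains \<alpha>' t' where "0 \<le> \<alpha>'" "\<forall>i\<in>I. shifted_rounding b (\<alpha>' * w i) (t' i)"
    "sum t' I = sum t I + 1"
proof -
  define P where "P = {i\<in>I. 0 < w i}"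
  define f where "f i = (of_int (t i) + b) / w i" for i
  \<comment> \<open>the least scaling factor at which some \<open>\<alpha>' w\<^sub>j\<close> reaches the threshold \<open>t\<^sub>j + b\<close>\<close>
  define \<alpha>' where "\<alpha>' = Min (f ` P)"
  have "finite P" "P \<noteq> {}"
    using assms(1,3) by (auto simp: P_def)
  then have "\<alpha>' \<in> f ` P"
    unfolding \<alpha>'_def by (intro Min_in) auto
  then obtain j where "j \<in> P" and \<alpha>'_eq: "\<alpha>' = f j"
    by blast
  then have "j \<in> I" "0 < w j" by (auto simp: P_def)
  then have \<alpha>'_wj: "\<alpha>' * w j = of_int (t j) + b"
    by (simp add: \<alpha>'_eq f_def)
  have below_next: "\<alpha>' * w i \<le> of_int (t i) + b" if "i \<in> I" for i
  proof (cases "w i = 0")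
    case False
    with that nonneg have "i \<in> P" "0 < w i" by (auto simp: P_def)
    with \<open>finite P\<close> have "\<alpha>' \<le> f i" by (simp add: \<alpha>'_def)
    with \<open>0 < w i\<close> show ?thesis by (simp add: f_def pos_le_divide_eq)
  qed (use that rounding in \<open>auto simp: shifted_rounding_def\<close>)
  have "\<alpha> * w j \<le> \<alpha>' * w j"
    using rounding \<open>j \<in> I\<close> \<alpha>'_wj by (auto simp: shifted_rounding_def)
  with \<open>0 < w j\<close> have "\<alpha> \<le> \<alpha>'" by simp
  define t' where "t' i = t i + (if i = j then 1 else 0)" for i
  show thesis
  proof
    show "0 \<le> \<alpha>'" using \<open>0 \<le> \<alpha>\<close> \<open>\<alpha> \<le> \<alpha>'\<close> by linarith
    show "sum t' I = sum t I + 1"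
      using \<open>finite I\<close> \<open>j \<in> I\<close> by (simp add: t'_def sum.distrib)
    show "\<forall>i\<in>I. shifted_rounding b (\<alpha>' * w i) (t' i)"
    proof
      fix i assume "i \<in> I"
      have "\<alpha> * w i \<le> \<alpha>' * w i"
        using \<open>\<alpha> \<le> \<alpha>'\<close> nonneg \<open>i \<in> I\<close> by (simp add: mult_right_mono)
      then show "shifted_rounding b (\<alpha>' * w i) (t' i)"
        using rounding below_next[OF \<open>i \<in> I\<close>] \<open>i \<in> I\<close> \<alpha>'_wj
        by (auto simp: shifted_rounding_def t'_def)
    qed
  qed
qed

lemma shifted_rounding_exists:
  fixes w :: "'a \<Rightarrow> real"
  assumes "finite I" "\<forall>i\<in>I. 0 \<le> w i" "\<exists>i\<in>I. 0 < w i" "0 \<le> b" "b \<le> 1"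
  shows "\<exists>\<alpha> (t :: 'a \<Rightarrow> int). 0 \<le> \<alpha> \<and> (\<forall>i\<in>I. shifted_rounding b (\<alpha> * w i) (t i))
           \<and> sum t I = int N"
proof (induction N)
  case 0
  have "\<forall>i\<in>I. shifted_rounding b (0 * w i) 0"
    using assms by (simp add: shifted_rounding_def)
  then show ?case
    by (intro exI[of _ 0] exI[of _ "\<lambda>_. 0"]) simp
next
  case (Suc N)
  then obtain \<alpha> and t :: "'a \<Rightarrow> int" where "0 \<le> \<alpha>"
    and rounding: "\<forall>i\<in>I. shifted_rounding b (\<alpha> * w i) (t i)" and "sum t I = int N"
    by blast
  obtain \<alpha>' t' where "0 \<le> \<alpha>'" "\<forall>i\<in>I. shifted_rounding b (\<alpha>' * w i) (t' i)"
    and "sum t' I = sum t I + 1"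
    using shifted_rounding_increment[OF assms(1-3) \<open>0 \<le> \<alpha>\<close> rounding] by blast
  with \<open>sum t I = int N\<close> show ?case
    by (intro exI[of _ \<alpha>'] exI[of _ t']) simp
qed

text \<open>Eliminating the common scaling factor: with \<open>W = w(I)\<close>, \<open>a = w(A)\<close> and
\<open>t(i) - \<alpha> w(i) \<in> [-b, 1 - b]\<close>, one gets \<open>W t(A) - t(I) a \<le> (W - a)(1 - b)|A| + a b |I - A|\<close>.\<close>

lemma shifted_rounding_subset_bound:
  fixes w :: "'a \<Rightarrow> real" and t :: "'a \<Rightarrow> int"
  assumes "finite I" "A \<subseteq> I" and nonneg: "\<forall>i\<in>I. 0 \<le> w i"
    and rounding: "\<forall>i\<in>I. shifted_rounding b (\<alpha> * w i) (t i)"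
    and light: "sum w A \<le> (1 - b) * sum w I"
  shows "sum w I * of_int (sum t A)
           \<le> of_int (sum t I) * sum w A + (sum w I - sum w A) * (1 - b) * real (card I)"
proof -
  define S where "S = I - A"
  define W where "W = sum w I"
  define a where "a = sum w A"
  define h where "h i = of_int (t i) - \<alpha> * w i" for i
  have "finite A" using assms(1,2) finite_subset by blast
  have W_split: "W = sum w S + a"
    using sum.subset_diff[OF assms(2,1)] by (simp add: S_def W_def a_def)
  have card_split: "card I = card S + card A"
    using card_Diff_subset[OF \<open>finite A\<close> assms(2)] card_mono[OF assms(1,2)]
    by (simp add: S_def)
  have "0 \<le> a" "0 \<le> W - a"
    using nonneg assms(2) W_split by (auto simp: a_def S_def intro!: sum_nonneg)
  have "(\<Sum>i\<in>S. - b) \<le> sum h S"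
    by (rule sum_mono) (use rounding in \<open>auto simp: S_def h_def shifted_rounding_def\<close>)
  then have h_S: "- b * card S \<le> sum h S" by (simp add: mult.commute)
  have "sum h A \<le> (\<Sum>i\<in>A. 1 - b)"
  proof (rule sum_mono)
    fix i assume "i \<in> A"
    with assms(2) have "i \<in> I" by blast
    with rounding show "h i \<le> 1 - b"
      by (auto simp: h_def shifted_rounding_def)
  qed
  then have h_A: "sum h A \<le> (1 - b) * card A" by (simp add: mult.commute)
  have h_sum: "sum h B = of_int (sum t B) - \<alpha> * sum w B" for B
    by (simp add: h_def sum_subtractf sum_distrib_left)
  have t_A: "of_int (sum t A) = \<alpha> * a + sum h A"
    by (simp add: h_sum a_def)
  have t_I: "of_int (sum t I) = \<alpha> * W + sum h S + sum h A"
    using sum.subset_diff[OF assms(2,1), of h] by (simp add: h_sum S_def W_def a_def)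
  have "W * of_int (sum t A) - of_int (sum t I) * a = (W - a) * sum h A - a * sum h S"
    unfolding t_A t_I by (simp add: algebra_simps)
  also have "\<dots> \<le> (W - a) * ((1 - b) * card A) + a * (b * card S)"
    using mult_left_mono[OF h_A \<open>0 \<le> W - a\<close>] mult_left_mono[OF h_S \<open>0 \<le> a\<close>] by simp
  also have "\<dots> = (W - a) * (1 - b) * card I + card S * (a - (1 - b) * W)"
    unfolding card_split of_nat_add by (simp add: algebra_simps)
  also have "\<dots> \<le> (W - a) * (1 - b) * card I"
  proof -
    have "a - (1 - b) * W \<le> 0"
      using light unfolding a_def W_def by linarith
    then have "card S * (a - (1 - b) * W) \<le> 0"
      by (simp add: mult_nonneg_nonpos)
    then show ?thesis by linarith
  qed
  finally show ?thesis
    unfolding W_def a_def by linarith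
qed

text \<open>The right-hand side \<open>T a + (W - a)(1 - \<beta>\<^sub>w) k\<close> is increasing in \<open>a\<close>, and at
\<open>a = (1 - \<beta>\<^sub>w) W\<close> it is at most \<open>(1 - \<beta>\<^sub>n) T W\<close> by the hypothesis on \<open>T\<close>.\<close>

lemma ticket_count_margin:
  fixes W a T k \<beta>w \<beta>n :: real
  assumes "a < (1 - \<beta>w) * W" "0 \<le> a" "0 < k"
    and "0 < \<beta>n" "\<beta>n < \<beta>w" "\<beta>w < 1"
    and T: "\<beta>w * (1 - \<beta>w) * k \<le> (\<beta>w - \<beta>n) * T"
  shows "T * a + (W - a) * (1 - \<beta>w) * k < (1 - \<beta>n) * T * W"
proof -
  define a\<^sub>0 where "a\<^sub>0 = (1 - \<beta>w) * W"
  have "0 < (1 - \<beta>w) * W" using assms(1,2) by linarith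
  then have "0 \<le> W" using assms(6) by (simp add: zero_less_mult_iff)
  have "(\<beta>w - \<beta>n) * ((1 - \<beta>w) * k) < \<beta>w * (1 - \<beta>w) * k"
    using assms(3-6) by simp
  with T have "(\<beta>w - \<beta>n) * ((1 - \<beta>w) * k) < (\<beta>w - \<beta>n) * T" by linarith
  then have slope: "0 < T - (1 - \<beta>w) * k"
    using assms(5) by (simp add: mult_less_cancel_left_pos)
  have "T * a\<^sub>0 + (W - a\<^sub>0) * (1 - \<beta>w) * k - (1 - \<beta>n) * T * W
          = W * (\<beta>w * (1 - \<beta>w) * k - (\<beta>w - \<beta>n) * T)"
    by (simp add: a\<^sub>0_def algebra_simps)
  also have "\<dots> \<le> 0"
    using T \<open>0 \<le> W\<close> by (simp add: mult_nonneg_nonpos)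
  finally have at_a\<^sub>0: "T * a\<^sub>0 + (W - a\<^sub>0) * (1 - \<beta>w) * k \<le> (1 - \<beta>n) * T * W"
    by linarith
  have "T * a + (W - a) * (1 - \<beta>w) * k
          = T * a\<^sub>0 + (W - a\<^sub>0) * (1 - \<beta>w) * k - (a\<^sub>0 - a) * (T - (1 - \<beta>w) * k)"
    by (simp add: algebra_simps)
  also have "\<dots> < T * a\<^sub>0 + (W - a\<^sub>0) * (1 - \<beta>w) * k"
    using slope assms(1) by (simp add: a\<^sub>0_def)
  finally show ?thesis using at_a\<^sub>0 by linarith
qed

lemma shifted_rounding_qualifies:
  fixes w :: "'a \<Rightarrow> real" and t :: "'a \<Rightarrow> int"
  assumes "finite I" "I \<noteq> {}" and nonneg: "\<forall>i\<in>I. 0 \<le> w i"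
    and "0 < \<beta>n" "\<beta>n < \<beta>w" "\<beta>w < 1"
    and rounding: "\<forall>i\<in>I. shifted_rounding \<beta>w (\<alpha> * w i) (t i)"
    and T: "\<beta>w * (1 - \<beta>w) * card I \<le> (\<beta>w - \<beta>n) * of_int (sum t I)"
    and "S \<subseteq> I" and heavy: "\<beta>w * sum w I < sum w S"
  shows "\<beta>n * of_int (sum t I) < of_int (sum t S)"
proof -
  define A where "A = I - S"
  define W where "W = sum w I"
  define N where "N = real_of_int (sum t I)"
  have "A \<subseteq> I" by (simp add: A_def)
  have w_A: "sum w A = W - sum w S" and t_A: "sum t A = sum t I - sum t S"
    using sum_diff[OF assms(1) \<open>S \<subseteq> I\<close>] by (simp_all add: A_def W_def)
  have light: "sum w A < (1 - \<beta>w) * W"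
    using heavy by (simp add: w_A W_def algebra_simps)
  have "0 \<le> sum w A"
    using nonneg \<open>A \<subseteq> I\<close> by (auto intro: sum_nonneg)
  with light have "0 < (1 - \<beta>w) * W" by linarith
  with assms(6) have "0 < W" by (simp add: zero_less_mult_iff)
  have "0 < real (card I)"
    using assms(1,2) by (simp add: card_gt_0_iff)
  have "W * of_int (sum t A) \<le> N * sum w A + (W - sum w A) * (1 - \<beta>w) * card I"
    using shifted_rounding_subset_bound[OF assms(1) \<open>A \<subseteq> I\<close> nonneg rounding] light
    by (simp add: W_def N_def)
  also have "\<dots> < (1 - \<beta>n) * N * W"
    using ticket_count_margin[OF light \<open>0 \<le> sum w A\<close> \<open>0 < real (card I)\<close> assms(4-6)] T
    by (simp add: N_def)
  finally have "W * of_int (sum t A) < W * ((1 - \<beta>n) * N)"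
    by (simp only: mult_ac)
  with \<open>0 < W\<close> have "of_int (sum t A) < (1 - \<beta>n) * N"
    by (simp only: mult_less_cancel_left_pos)
  then show ?thesis by (simp add: t_A N_def algebra_simps)
qed

theorem corollary1:
  fixes n :: nat and \<beta>w \<beta>n :: real and w :: "nat \<Rightarrow> real"
  assumes "n \<ge> 1"
    and "0 < \<beta>w" "\<beta>w < 1" "0 < \<beta>n" "\<beta>n < 1" "\<beta>n < \<beta>w"
    and "\<forall>i\<in>{1..n}. w i \<ge> 0"
    and "(\<Sum>i\<in>{1..n}. w i) \<noteq> 0"
  shows "\<exists>t :: nat \<Rightarrow> int.
           (\<forall>i\<in>{1..n}. t i \<ge> 0) \<and>
           (\<forall>S \<subseteq> {1..n}. (\<Sum>i\<in>S. w i) > \<beta>w * (\<Sum>i\<in>{1..n}. w i)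
               \<longrightarrow> real_of_int (\<Sum>i\<in>S. t i) > \<beta>n * real_of_int (\<Sum>i\<in>{1..n}. t i)) \<and>
           (\<Sum>i\<in>{1..n}. t i) \<le> \<lceil>\<beta>w * (1 - \<beta>w) / (\<beta>w - \<beta>n) * real n\<rceil>"
proof -
  define T where "T = \<lceil>\<beta>w * (1 - \<beta>w) / (\<beta>w - \<beta>n) * real n\<rceil>"
  have "0 < T" using assms(1-3,6) by (simp add: T_def)
  have "\<exists>i\<in>{1..n}. 0 < w i"
    using assms(7,8) by (metis order_le_less sum.neutral)
  then obtain \<alpha> t where "0 \<le> \<alpha>" and rounding: "\<forall>i\<in>{1..n}. shifted_rounding \<beta>w (\<alpha> * w i) (t i)"
    and sum_t: "(\<Sum>i\<in>{1..n}. t i) = T"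
    using shifted_rounding_exists[of "{1..n}" w \<beta>w "nat T"] assms(2,3,7) \<open>0 < T\<close> by auto
  have "\<beta>w * (1 - \<beta>w) / (\<beta>w - \<beta>n) * real n \<le> of_int T"
    by (simp add: T_def)
  then have "\<beta>w * (1 - \<beta>w) * card {1..n} \<le> (\<beta>w - \<beta>n) * of_int T"
    using assms(6) by (simp add: pos_divide_le_eq mult_ac)
  then have T_large: "\<beta>w * (1 - \<beta>w) * card {1..n} \<le> (\<beta>w - \<beta>n) * of_int (\<Sum>i\<in>{1..n}. t i)"
    unfolding sum_t .
  have "\<forall>i\<in>{1..n}. 0 \<le> t i"
    using rounding assms(3,7) \<open>0 \<le> \<alpha>\<close> by (auto intro: shifted_rounding_nonneg)
  moreover have "\<forall>S \<subseteq> {1..n}. (\<Sum>i\<in>S. w i) > \<beta>w * (\<Sum>i\<in>{1..n}. w i)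
      \<longrightarrow> real_of_int (\<Sum>i\<in>S. t i) > \<beta>n * real_of_int (\<Sum>i\<in>{1..n}. t i)"
    using shifted_rounding_qualifies[OF _ _ assms(7,4,6,3) rounding T_large] assms(1) by auto
  ultimately show ?thesis
    using sum_t by (auto simp: T_def)
qed

end
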